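(* Let $X \subseteq \mathbb{Z}^{\omega}$ be closed under tail-equivalence. Then $X$ is homogeneous in $\mathbb{Z}^{\omega}$: for every open interval $I$ of $\mathbb{Z}^{\omega}$ we have $X \cong X\cap I$ (order-isomorphism). In particular, $X \cong X \cap I_r$ for every nonempty finite integer sequence $r$, where $I_r$ is the set of elements of $\mathbb{Z}^{\omega}$ beginning with $r$.
   Context: $\mathbb{Z}^{\omega}$ is the set of integer sequences with the lexicographic order ($u<v$ iff $u_n<v_n$ at the least $n$ with $u_n\ne v_n$). For a finite nonempty integer sequence $r$ and a sequence $u$, $ru$ is concatenation. $u,v\in\mathbb{Z}^{\omega}$ are tail-equivalent if $u=ru'$ and $v=su'$ for some finite sequences $r,s$ (possibly of different lengths) and some $u'\in\mathbb{Z}^{\omega}$; $X$ is closed under tail-equivalence if it is a union of tail-equivalence classes. An open interval of a linear order is a nonempty convex subset with neither a greatest nor a least element (its endpoints, if any, may be gaps of $\mathbb{Z}^{\omega}$). *)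

theory Defs
  imports Main
begin

type_synonym zseq = "nat \<Rightarrow> int"

definition lex_less :: "zseq \<Rightarrow> zseq \<Rightarrow> bool" where
  "lex_less u v \<longleftrightarrow> (\<exists>n. (\<forall>m<n. u m = v m) \<and> u n < v n)"

definition lex_le :: "zseq \<Rightarrow> zseq \<Rightarrow> bool" where
  "lex_le u v \<longleftrightarrow> lex_less u v \<or> u = v"

definition conc :: "int list \<Rightarrow> zseq \<Rightarrow> zseq" where
  "conc r u = (\<lambda>n. if n < length r then r ! n else u (n - length r))"

definition tail_equiv :: "zseq \<Rightarrow> zseq \<Rightarrow> bool" where
  "tail_equiv u v \<longleftrightarrow> (\<exists>r s w. u = conc r w \<and> v = conc s w)"

definition closed_tail_equiv :: "zseq set \<Rightarrow> bool" where
  "closed_tail_equiv X \<longleftrightarrow> (\<forall>u v. u \<in> X \<longrightarrow> tail_equiv u v \<longrightarrow> v \<in> X)"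

definition open_interval :: "zseq set \<Rightarrow> bool" where
  "open_interval I \<longleftrightarrow> I \<noteq> {}
     \<and> (\<forall>a b c. a \<in> I \<longrightarrow> c \<in> I \<longrightarrow> lex_le a b \<longrightarrow> lex_le b c \<longrightarrow> b \<in> I)
     \<and> (\<forall>a\<in>I. \<exists>b\<in>I. lex_less a b)
     \<and> (\<forall>a\<in>I. \<exists>b\<in>I. lex_less b a)"

definition lex_iso :: "zseq set \<Rightarrow> zseq set \<Rightarrow> bool" where
  "lex_iso A B \<longleftrightarrow> (\<exists>f. bij_betw f A B \<and>
     (\<forall>u\<in>A. \<forall>v\<in>A. lex_less u v \<longleftrightarrow> lex_less (f u) (f v)))"

definition cyl :: "int list \<Rightarrow> zseq set" where
  "cyl r = {u. \<exists>w. u = conc r w}"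

end

theory Submission
  imports Defs
begin

text \<open>
Call a bijection between subsets of \<int>^\<omega> a tail isomorphism if it preserves the
lexicographic order and sends every sequence to a tail-equivalent one. A tail isomorphism from
\<int>^\<omega> onto I maps every X closed under tail-equivalence onto X \<inter> I, so it suffices to show
that every open interval and every cylinder I_r is tail-isomorphic to \<int>^\<omega>.

Prefixing a fixed word and changing the first entry are tail isomorphisms; combining them with
ordered sums shows that \<int>^\<omega> is tail-isomorphic to {u. u 0 \<le> k}, to {u. k \<le> u 0}, and to any
ordered sum of finitely many or \<omega> copies of itself. A down-set S without maximum is such a sum:
sorting x \<in> S by the length of the shortest prefix of x all of whose extensions lie in S cuts S
into consecutive blocks of the form r \<cdot> {v. v 0 \<le> M}. Up-sets follow by negating all entries.
Finally, an open interval is cut at a gap of \<int>^\<omega> into a final segment of a down-set and an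
initial segment of an up-set.
\<close>

section \<open>Lexicographic order, concatenation and tail-equivalence\<close>

lemma lex_lessI: "(\<And>m. m < n \<Longrightarrow> u m = v m) \<Longrightarrow> u n < v n \<Longrightarrow> lex_less u v"
  unfolding lex_less_def by blast

lemma lex_less_irrefl [simp]: "\<not> lex_less u u"
  by (auto simp: lex_less_def)

lemma lex_less_trans: "lex_less u v \<Longrightarrow> lex_less v w \<Longrightarrow> lex_less u w"
proof -
  assume "lex_less u v" "lex_less v w"
  then obtain n m where n: "\<forall>k<n. u k = v k" "u n < v n" and m: "\<forall>k<m. v k = w k" "v m < w m"
    by (auto simp: lex_less_def)
  show ?thesis
  proof (rule lex_lessI[of "min n m"])
    show "u k = w k" if "k < min n m" for k
      using n m that by simp
    show "u (min n m) < w (min n m)"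
      using n m by (cases n m rule: linorder_cases) auto
  qed
qed

lemma lex_less_asym: "lex_less u v \<Longrightarrow> \<not> lex_less v u"
  using lex_less_trans lex_less_irrefl by blast

lemma lex_less_linear: "lex_less u v \<or> u = v \<or> lex_less v u"
proof (cases "u = v")
  case False
  then have ex: "\<exists>n. u n \<noteq> v n" by auto
  define n where "n = (LEAST n. u n \<noteq> v n)"
  have "u n \<noteq> v n" unfolding n_def using ex by (rule LeastI_ex)
  moreover have "\<forall>k<n. u k = v k" unfolding n_def using not_less_Least by blast
  ultimately show ?thesis unfolding lex_less_def by (metis linorder_neqE)
qed simp

lemma conc_nth_less [simp]: "n < length r \<Longrightarrow> conc r u n = r ! n"
  by (simp add: conc_def)

lemma conc_nth_add [simp]: "conc r u (n + length r) = u n"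
  by (simp add: conc_def)

lemma lex_less_conc_iff [simp]: "lex_less (conc r u) (conc r v) \<longleftrightarrow> lex_less u v"
proof
  assume "lex_less u v"
  then obtain n where "\<forall>k<n. u k = v k" "u n < v n" by (auto simp: lex_less_def)
  then show "lex_less (conc r u) (conc r v)"
    by (intro lex_lessI[of "n + length r"]) (auto simp: conc_def)
next
  assume "lex_less (conc r u) (conc r v)"
  then obtain n where n: "\<forall>k<n. conc r u k = conc r v k" "conc r u n < conc r v n"
    by (auto simp: lex_less_def)
  then have "length r \<le> n" by (cases "n < length r") auto
  show "lex_less u v"
  proof (rule lex_lessI[of "n - length r"])
    show "u k = v k" if "k < n - length r" for k
      using n(1) that by (metis conc_nth_add less_diff_conv)
    show "u (n - length r) < v (n - length r)"
      using n(2) \<open>length r \<le> n\<close> by (simp add: conc_def)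
  qed
qed

lemma mem_cyl: "z \<in> cyl r \<longleftrightarrow> (\<forall>i<length r. z i = r ! i)"
proof
  assume "\<forall>i<length r. z i = r ! i"
  then have "z = conc r (\<lambda>n. z (n + length r))"
    by (auto simp: conc_def)
  then show "z \<in> cyl r" by (auto simp: cyl_def)
qed (auto simp: cyl_def)

lemma tail_equiv_iff_shift: "tail_equiv u v \<longleftrightarrow> (\<exists>a b. \<forall>n. u (n + a) = v (n + b))"
proof
  assume "tail_equiv u v"
  then obtain r s w where "u = conc r w" "v = conc s w" by (auto simp: tail_equiv_def)
  then show "\<exists>a b. \<forall>n. u (n + a) = v (n + b)"
    by (intro exI[of _ "length r"] exI[of _ "length s"]) simp
next
  assume "\<exists>a b. \<forall>n. u (n + a) = v (n + b)"
  then obtain a b where ab: "\<And>n. u (n + a) = v (n + b)" by blast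
  define w where "w n = u (n + a)" for n
  have "u = conc (map u [0..<a]) w"
    by (auto simp: conc_def w_def)
  moreover have "v = conc (map v [0..<b]) w"
  proof
    show "v n = conc (map v [0..<b]) w n" for n
      using ab[of "n - b"] by (cases "n < b") (auto simp: conc_def w_def)
  qed
  ultimately show "tail_equiv u v" unfolding tail_equiv_def by blast
qed

lemma tail_equiv_refl: "tail_equiv u u"
  unfolding tail_equiv_iff_shift by auto

lemma tail_equiv_sym: "tail_equiv u v \<Longrightarrow> tail_equiv v u"
  unfolding tail_equiv_iff_shift by metis

lemma tail_equiv_trans: "tail_equiv u v \<Longrightarrow> tail_equiv v w \<Longrightarrow> tail_equiv u w"
proof -
  assume "tail_equiv u v" "tail_equiv v w"
  then obtain a b c d where ab: "\<And>n. u (n + a) = v (n + b)" and cd: "\<And>n. v (n + c) = w (n + d)"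
    unfolding tail_equiv_iff_shift by blast
  have "u (n + (c + a)) = w (n + (b + d))" for n
    using ab[of "n + c"] cd[of "n + b"] by (simp add: ac_simps)
  then show ?thesis unfolding tail_equiv_iff_shift by blast
qed

lemma tail_equiv_conc: "tail_equiv u (conc r u)"
  unfolding tail_equiv_iff_shift by (intro exI[of _ 0] exI[of _ "length r"]) simp

lemma uminus_uminus_zseq [simp]: "- (- u) = (u :: zseq)"
  by (simp add: fun_eq_iff)

lemma mem_uminus_image_iff [simp]: "x \<in> uminus ` S \<longleftrightarrow> - x \<in> (S :: zseq set)"
  by (metis image_iff uminus_uminus_zseq)

lemma uminus_image_uminus_image [simp]: "uminus ` uminus ` S = (S :: zseq set)"
  by (simp add: image_image)

lemma uminus_image_UNIV [simp]: "uminus ` (UNIV :: zseq set) = UNIV"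
  by auto

lemma lex_less_uminus_iff [simp]: "lex_less (- u) (- v) \<longleftrightarrow> lex_less v u"
  unfolding lex_less_def by (metis uminus_apply neg_equal_iff_equal neg_less_iff_less)

lemma tail_equiv_uminus_iff [simp]: "tail_equiv (- u) (- v) \<longleftrightarrow> tail_equiv u v"
  unfolding tail_equiv_iff_shift by simp

section \<open>Tail isomorphisms\<close>

definition tail_iso_on :: "(zseq \<Rightarrow> zseq) \<Rightarrow> zseq set \<Rightarrow> zseq set \<Rightarrow> bool" where
  "tail_iso_on f S T \<longleftrightarrow> bij_betw f S T
     \<and> (\<forall>u\<in>S. \<forall>v\<in>S. lex_less u v \<longrightarrow> lex_less (f u) (f v))
     \<and> (\<forall>u\<in>S. tail_equiv u (f u))"

definition tail_isomorphic :: "zseq set \<Rightarrow> zseq set \<Rightarrow> bool" where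
  "tail_isomorphic S T \<longleftrightarrow> (\<exists>f. tail_iso_on f S T)"

lemma tail_iso_onI:
  assumes "f ` S = T"
    and mono: "\<And>u v. u \<in> S \<Longrightarrow> v \<in> S \<Longrightarrow> lex_less u v \<Longrightarrow> lex_less (f u) (f v)"
    and "\<And>u. u \<in> S \<Longrightarrow> tail_equiv u (f u)"
  shows "tail_iso_on f S T"
proof -
  have "inj_on f S"
    by (rule inj_onI) (metis mono lex_less_irrefl lex_less_linear)
  then show ?thesis
    using assms unfolding tail_iso_on_def bij_betw_def by blast
qed

lemma tail_iso_onD:
  assumes "tail_iso_on f S T"
  shows tail_iso_on_bij: "bij_betw f S T"
    and tail_iso_on_lex_less_iff: "u \<in> S \<Longrightarrow> v \<in> S \<Longrightarrow> lex_less (f u) (f v) \<longleftrightarrow> lex_less u v"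
    and tail_iso_on_tail_equiv: "u \<in> S \<Longrightarrow> tail_equiv u (f u)"
  using assms lex_less_asym lex_less_linear unfolding tail_iso_on_def by metis+

lemma tail_iso_on_subset: "tail_iso_on f S T \<Longrightarrow> S' \<subseteq> S \<Longrightarrow> tail_iso_on f S' (f ` S')"
  unfolding tail_iso_on_def by (auto intro: bij_betw_subset)

lemma tail_isomorphic_refl: "tail_isomorphic S S"
  unfolding tail_isomorphic_def by (rule exI[of _ id], rule tail_iso_onI) (auto simp: tail_equiv_refl)

lemma tail_isomorphic_sym: "tail_isomorphic S T \<Longrightarrow> tail_isomorphic T S"
proof -
  assume "tail_isomorphic S T"
  then obtain f where f: "tail_iso_on f S T" by (auto simp: tail_isomorphic_def)
  define g where "g = the_inv_into S f"
  have bij: "bij_betw f S T" using f by (rule tail_iso_on_bij)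
  have g: "bij_betw g T S" unfolding g_def using bij by (rule bij_betw_the_inv_into)
  have fg: "f (g y) = y" if "y \<in> T" for y
    unfolding g_def using bij that by (rule f_the_inv_into_f_bij_betw)
  have gT: "g y \<in> S" if "y \<in> T" for y
    using g that by (rule bij_betw_apply)
  have "tail_iso_on g T S"
  proof (rule tail_iso_onI)
    show "lex_less (g u) (g v)" if "u \<in> T" "v \<in> T" "lex_less u v" for u v
      using that tail_iso_on_lex_less_iff[OF f gT gT, of u v] fg by simp
    show "tail_equiv u (g u)" if "u \<in> T" for u
      using that tail_iso_on_tail_equiv[OF f gT[of u]] fg[of u] tail_equiv_sym by simp
  qed (use g in \<open>simp add: bij_betw_def\<close>)
  then show ?thesis by (auto simp: tail_isomorphic_def)
qed

lemma tail_isomorphic_trans: "tail_isomorphic S T \<Longrightarrow> tail_isomorphic T U \<Longrightarrow> tail_isomorphic S U"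
proof -
  assume "tail_isomorphic S T" "tail_isomorphic T U"
  then obtain f g where f: "tail_iso_on f S T" and g: "tail_iso_on g T U"
    by (auto simp: tail_isomorphic_def)
  have fS: "f u \<in> T" if "u \<in> S" for u
    using bij_betw_apply[OF tail_iso_on_bij[OF f] that] .
  have "tail_iso_on (g \<circ> f) S U"
  proof (rule tail_iso_onI)
    show "(g \<circ> f) ` S = U"
      using bij_betw_trans[OF tail_iso_on_bij[OF f] tail_iso_on_bij[OF g]] by (simp add: bij_betw_def)
    show "lex_less ((g \<circ> f) u) ((g \<circ> f) v)" if "u \<in> S" "v \<in> S" "lex_less u v" for u v
      using that fS tail_iso_on_lex_less_iff[OF f] tail_iso_on_lex_less_iff[OF g] by simp
    show "tail_equiv u ((g \<circ> f) u)" if "u \<in> S" for u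
      using that fS tail_iso_on_tail_equiv[OF f] tail_iso_on_tail_equiv[OF g] tail_equiv_trans
      by (metis comp_apply)
  qed
  then show ?thesis by (auto simp: tail_isomorphic_def)
qed

lemma tail_isomorphic_conc_image: "tail_isomorphic S (conc r ` S)"
  unfolding tail_isomorphic_def
  by (rule exI[of _ "conc r"], rule tail_iso_onI) (auto simp: tail_equiv_conc)

lemma tail_isomorphic_cyl: "tail_isomorphic UNIV (cyl r)"
proof -
  have "cyl r = range (conc r)" by (auto simp: cyl_def)
  then show ?thesis using tail_isomorphic_conc_image[of UNIV r] by simp
qed

lemma tail_isomorphic_uminus_image:
  assumes "tail_isomorphic S T"
  shows "tail_isomorphic (uminus ` S) (uminus ` T)"
proof -
  obtain f where f: "tail_iso_on f S T" using assms by (auto simp: tail_isomorphic_def)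
  have "tail_iso_on (\<lambda>u. - f (- u)) (uminus ` S) (uminus ` T)"
  proof (rule tail_iso_onI)
    have T: "T = f ` S" using tail_iso_on_bij[OF f] by (simp add: bij_betw_def)
    show "(\<lambda>u. - f (- u)) ` uminus ` S = uminus ` T" unfolding T by (simp add: image_image)
    show "tail_equiv u (- f (- u))" if "u \<in> uminus ` S" for u
      using that tail_iso_on_tail_equiv[OF f, of "- u"] tail_equiv_uminus_iff[of "- u"] by simp
  qed (use tail_iso_on_lex_less_iff[OF f] in auto)
  then show ?thesis by (auto simp: tail_isomorphic_def)
qed

lemma tail_isomorphic_UN:
  fixes P A :: "'i::linorder \<Rightarrow> zseq set"
  assumes iso: "\<And>i. i \<in> K \<Longrightarrow> tail_isomorphic (P i) (A i)"
    and P_ordered: "\<And>i j x y. i \<in> K \<Longrightarrow> j \<in> K \<Longrightarrow> i < j \<Longrightarrow> x \<in> P i \<Longrightarrow> y \<in> P j \<Longrightarrow> lex_less x y"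
    and A_ordered: "\<And>i j x y. i \<in> K \<Longrightarrow> j \<in> K \<Longrightarrow> i < j \<Longrightarrow> x \<in> A i \<Longrightarrow> y \<in> A j \<Longrightarrow> lex_less x y"
  shows "tail_isomorphic (\<Union>i\<in>K. P i) (\<Union>i\<in>K. A i)"
proof -
  obtain F where F: "\<And>i. i \<in> K \<Longrightarrow> tail_iso_on (F i) (P i) (A i)"
    using iso unfolding tail_isomorphic_def by metis
  have FP: "F i ` P i = A i" if "i \<in> K" for i
    using tail_iso_on_bij[OF F[OF that]] by (simp add: bij_betw_def)
  have index_unique: "i = j" if "i \<in> K" "j \<in> K" "x \<in> P i" "x \<in> P j" for i j x
    using P_ordered[of i j x x] P_ordered[of j i x x] that by (metis lex_less_irrefl linorder_neqE)
  define f where "f x = F (SOME i. i \<in> K \<and> x \<in> P i) x" for x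
  have f: "f x = F i x" if "i \<in> K" "x \<in> P i" for i x
    unfolding f_def using someI[of "\<lambda>i. i \<in> K \<and> x \<in> P i" i] index_unique that by metis
  have "tail_iso_on f (\<Union>i\<in>K. P i) (\<Union>i\<in>K. A i)"
  proof (rule tail_iso_onI)
    show "f ` (\<Union>i\<in>K. P i) = (\<Union>i\<in>K. A i)"
      using f FP by (auto simp: image_UN)
    show "lex_less (f x) (f y)"
      if xy: "x \<in> (\<Union>i\<in>K. P i)" "y \<in> (\<Union>i\<in>K. P i)" "lex_less x y" for x y
    proof -
      obtain i j where ij: "i \<in> K" "x \<in> P i" "j \<in> K" "y \<in> P j" using xy by blast
      have FA: "F i x \<in> A i" "F j y \<in> A j" using ij FP by blast+
      consider "i < j" | "i = j" | "j < i" by fastforce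
      then show ?thesis
      proof cases
        case 1 then show ?thesis using A_ordered ij FA f by simp
      next
        case 2 then show ?thesis using tail_iso_on_lex_less_iff[OF F] ij f xy(3) by simp
      next
        case 3 then show ?thesis using P_ordered[of j i y x] ij xy(3) lex_less_asym by blast
      qed
    qed
    show "tail_equiv x (f x)" if "x \<in> (\<Union>i\<in>K. P i)" for x
      using that f tail_iso_on_tail_equiv[OF F] by auto
  qed
  then show ?thesis by (auto simp: tail_isomorphic_def)
qed

section \<open>Sums of copies of \<int>^\<omega>\<close>

lemma lex_less_conc_zero_iff: "lex_less (\<lambda>_. 0) (conc [0] u) \<longleftrightarrow> lex_less (\<lambda>_. 0) u"
proof -
  have "conc [0] (\<lambda>_. 0) = (\<lambda>_. 0)" by (auto simp: conc_def)
  then show ?thesis using lex_less_conc_iff[of "[0]" "\<lambda>_. 0" u] by simp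
qed

lemma tail_isomorphic_UNIV_nonpos: "tail_isomorphic UNIV {u. u 0 \<le> 0}"
proof -
  \<comment> \<open>Prefixing a 0 to every sequence above the zero sequence keeps it above, but with head 0.\<close>
  define f where "f u = (if lex_less (\<lambda>_. 0) u then conc [0] u else u)" for u :: zseq
  have head: "f u 0 \<le> 0" for u
    using lex_lessI[of 0 "\<lambda>_. 0" u] by (force simp: f_def)
  have "w \<in> range f" if "w 0 \<le> 0" for w
  proof (cases "lex_less (\<lambda>_. 0) w")
    case True
    then have "w 0 = 0" using that lex_lessI[of 0 w "\<lambda>_. 0"] lex_less_asym by force
    then have w: "w = conc [0] (\<lambda>n. w (Suc n))" by (auto simp: conc_def)
    then have "f (\<lambda>n. w (Suc n)) = w" using True lex_less_conc_zero_iff f_def by metis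
    then show ?thesis by (metis rangeI)
  next
    case False
    then show ?thesis by (metis f_def rangeI)
  qed
  then have "range f = {u. u 0 \<le> 0}" using head by auto
  moreover have "lex_less (f u) (f v)" if uv: "lex_less u v" for u v
  proof (cases "lex_less (\<lambda>_. 0) u"; cases "lex_less (\<lambda>_. 0) v")
    assume "\<not> lex_less (\<lambda>_. 0) u" "lex_less (\<lambda>_. 0) v"
    moreover have "u = (\<lambda>_. 0) \<or> lex_less u (\<lambda>_. 0)"
      using calculation(1) lex_less_linear by blast
    ultimately show ?thesis
      using lex_less_conc_zero_iff[of v] lex_less_trans unfolding f_def by auto
  next
    assume "lex_less (\<lambda>_. 0) u" "\<not> lex_less (\<lambda>_. 0) v"
    then show ?thesis using uv lex_less_trans by blast
  qed (use uv in \<open>simp_all add: f_def\<close>)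
  moreover have "tail_equiv u (f u)" for u
    by (simp add: f_def tail_equiv_conc tail_equiv_refl)
  ultimately show ?thesis
    unfolding tail_isomorphic_def by (blast intro: tail_iso_onI)
qed

lemma tail_isomorphic_UNIV_le: "tail_isomorphic UNIV {u. u 0 \<le> k}"
proof -
  define t where "t u = u(0 := u 0 + k)" for u :: zseq
  have "t ` {u. u 0 \<le> 0} = {u. u 0 \<le> k}"
  proof (intro equalityI subsetI)
    fix w :: zseq assume "w \<in> {u. u 0 \<le> k}"
    then have "w = t (w(0 := w 0 - k))" "w(0 := w 0 - k) \<in> {u. u 0 \<le> 0}"
      by (auto simp: t_def)
    then show "w \<in> t ` {u. u 0 \<le> 0}" by blast
  qed (auto simp: t_def)
  moreover have "lex_less (t u) (t v)" if "lex_less u v" for u v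
    using that unfolding lex_less_def t_def by (metis add_less_cancel_right fun_upd_apply)
  moreover have "tail_equiv u (t u)" for u
    unfolding tail_equiv_iff_shift t_def by (intro exI[of _ 1]) auto
  ultimately have "tail_isomorphic {u. u 0 \<le> 0} {u. u 0 \<le> k}"
    unfolding tail_isomorphic_def by (blast intro: tail_iso_onI)
  then show ?thesis using tail_isomorphic_UNIV_nonpos tail_isomorphic_trans by blast
qed

lemma tail_isomorphic_UNIV_ge: "tail_isomorphic UNIV {u. k \<le> u 0}"
proof -
  have "uminus ` {u :: zseq. u 0 \<le> - k} = {u. k \<le> u 0}"
    by auto
  then show ?thesis
    using tail_isomorphic_uminus_image[OF tail_isomorphic_UNIV_le[of "- k"]] by simp
qed

lemma tail_isomorphic_UNIV_Un:
  assumes "tail_isomorphic UNIV A" "tail_isomorphic UNIV B"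
    and AB: "\<And>x y. x \<in> A \<Longrightarrow> y \<in> B \<Longrightarrow> lex_less x y"
  shows "tail_isomorphic UNIV (A \<union> B)"
proof -
  define P where "P b = (if b then {u :: zseq. 1 \<le> u 0} else {u. u 0 \<le> 0})" for b
  define Q where "Q b = (if b then B else A)" for b
  have "tail_isomorphic (\<Union>b\<in>UNIV. P b) (\<Union>b\<in>UNIV. Q b)"
  proof (rule tail_isomorphic_UN)
    show "tail_isomorphic (P b) (Q b)" for b
    proof -
      have "tail_isomorphic (P b) UNIV"
        unfolding P_def using tail_isomorphic_UNIV_le tail_isomorphic_UNIV_ge tail_isomorphic_sym by simp
      moreover have "tail_isomorphic UNIV (Q b)"
        unfolding Q_def using assms by simp
      ultimately show ?thesis by (rule tail_isomorphic_trans)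
    qed
    show "lex_less x y" if "i < j" "x \<in> P i" "y \<in> P j" for i j x y
      using that unfolding P_def by (auto intro: lex_lessI[of 0])
    show "lex_less x y" if "i < j" "x \<in> Q i" "y \<in> Q j" for i j x y
      using that AB unfolding Q_def by auto
  qed
  moreover have "(\<Union>b. P b) = UNIV"
  proof -
    have "u \<in> P (0 < u 0)" for u unfolding P_def by auto
    then show ?thesis by blast
  qed
  moreover have "(\<Union>b. Q b) = A \<union> B"
    unfolding Q_def by auto
  ultimately show ?thesis by simp
qed

lemma tail_isomorphic_UNIV_UN_lessThan:
  fixes A :: "nat \<Rightarrow> zseq set"
  assumes "0 < N" "\<And>n. n < N \<Longrightarrow> tail_isomorphic UNIV (A n)"
    and ordered: "\<And>m n x y. m < n \<Longrightarrow> x \<in> A m \<Longrightarrow> y \<in> A n \<Longrightarrow> lex_less x y"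
  shows "tail_isomorphic UNIV (\<Union>n<N. A n)"
proof -
  have "tail_isomorphic UNIV (\<Union>n<Suc M. A n)" if "Suc M \<le> N" for M
    using that
  proof (induction M)
    case (Suc M)
    then have "tail_isomorphic UNIV ((\<Union>n<Suc M. A n) \<union> A (Suc M))"
      using assms(2) ordered by (intro tail_isomorphic_UNIV_Un) auto
    then show ?case by (simp add: lessThan_Suc Un_commute)
  qed (use assms(2) in \<open>simp add: lessThan_Suc\<close>)
  then show ?thesis using \<open>0 < N\<close> by (metis Suc_pred order_refl)
qed

lemma tail_isomorphic_UNIV_UN:
  fixes A :: "nat \<Rightarrow> zseq set"
  assumes "\<And>n. tail_isomorphic UNIV (A n)"
    and ordered: "\<And>m n x y. m < n \<Longrightarrow> x \<in> A m \<Longrightarrow> y \<in> A n \<Longrightarrow> lex_less x y"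
  shows "tail_isomorphic UNIV (\<Union>n. A n)"
proof -
  have "tail_isomorphic (\<Union>n. cyl [int n]) (\<Union>n. A n)"
  proof (rule tail_isomorphic_UN)
    show "tail_isomorphic (cyl [int n]) (A n)" for n
      using assms(1) tail_isomorphic_cyl tail_isomorphic_sym tail_isomorphic_trans by blast
    show "lex_less x y" if "i < j" "x \<in> cyl [int i]" "y \<in> cyl [int j]" for i j x y
      using that by (auto simp: mem_cyl intro: lex_lessI[of 0])
  qed (use ordered in blast)
  moreover have "(\<Union>n. cyl [int n]) = {u. 0 \<le> u 0}"
  proof -
    have "u \<in> cyl [int (nat (u 0))]" if "0 \<le> u 0" for u
      using that by (simp add: mem_cyl)
    then show ?thesis by (fastforce simp: mem_cyl)
  qed
  ultimately show ?thesis
    using tail_isomorphic_trans[OF tail_isomorphic_UNIV_ge] by simp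
qed

section \<open>Down-sets and up-sets\<close>

lemma int_Sup_mem:
  fixes X :: "int set"
  assumes "X \<noteq> {}" "bdd_above X"
  shows "Sup X \<in> X"
proof -
  obtain x where x: "x \<in> X" "Sup X - 1 < x"
    using less_cSup_iff[OF assms, of "Sup X - 1"] by auto
  moreover have "x \<le> Sup X" using cSup_upper[OF x(1) assms(2)] .
  ultimately show ?thesis by (metis antisym zless_imp_add1_zle diff_add_cancel)
qed

lemma conc_image_head_le:
  "conc r ` {v. v 0 \<le> M} = {x. (\<forall>i<length r. x i = r ! i) \<and> x (length r) \<le> M}"
proof (intro equalityI subsetI)
  fix x assume "x \<in> {x. (\<forall>i<length r. x i = r ! i) \<and> x (length r) \<le> M}"
  moreover have "x = conc r (\<lambda>j. x (j + length r))"
    using calculation by (auto simp: conc_def)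
  ultimately show "x \<in> conc r ` {v. v 0 \<le> M}"
    by (metis (mono_tags, lifting) image_eqI mem_Collect_eq add_0)
qed (auto simp: conc_def)

definition agree :: "zseq \<Rightarrow> nat \<Rightarrow> zseq set" where
  "agree x n = {z. \<forall>i<n. z i = x i}"

lemma agree_antimono: "m \<le> n \<Longrightarrow> agree x n \<subseteq> agree x m"
  by (auto simp: agree_def)

lemma agree_cong: "(\<And>i. i < n \<Longrightarrow> x i = y i) \<Longrightarrow> agree x n = agree y n"
  by (auto simp: agree_def)

lemma self_in_agree [simp]: "x \<in> agree x n"
  by (simp add: agree_def)

lemma agree_0 [simp]: "agree x 0 = UNIV"
  by (simp add: agree_def)

locale lex_downset =
  fixes S :: "zseq set"
  assumes down_closed: "x \<in> S \<Longrightarrow> lex_less y x \<Longrightarrow> y \<in> S"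
    and no_max: "x \<in> S \<Longrightarrow> \<exists>y\<in>S. lex_less x y"
    and nonempty: "S \<noteq> {}"
    and proper: "S \<noteq> UNIV"
begin

definition level :: "nat \<Rightarrow> zseq set" where
  "level n = {x. agree x (Suc n) \<subseteq> S \<and> \<not> agree x n \<subseteq> S}"

lemma agree_Suc_subset:
  assumes "x \<in> S" "\<And>j. j < i \<Longrightarrow> y j = x j" "y i < x i"
  shows "agree y (Suc i) \<subseteq> S"
proof
  fix z assume "z \<in> agree y (Suc i)"
  then have "lex_less z x"
    using assms(2,3) by (intro lex_lessI[of i]) (auto simp: agree_def)
  then show "z \<in> S" using down_closed assms(1) by blast
qed

lemma level_subset: "level n \<subseteq> S"
  unfolding level_def using self_in_agree by blast

lemma UN_level: "(\<Union>n. level n) = S"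
proof (intro equalityI subsetI)
  fix x assume "x \<in> S"
  then obtain y where "y \<in> S" "lex_less x y" using no_max by blast
  then obtain i where "\<forall>j<i. x j = y j" "x i < y i" by (auto simp: lex_less_def)
  then have ex: "\<exists>k. agree x k \<subseteq> S" using agree_Suc_subset[OF \<open>y \<in> S\<close>] by metis
  define k where "k = (LEAST k. agree x k \<subseteq> S)"
  have k: "agree x k \<subseteq> S" unfolding k_def using ex by (rule LeastI_ex)
  then obtain n where n: "k = Suc n" using proper by (cases k) auto
  then have "\<not> agree x n \<subseteq> S" using not_less_Least[of n "\<lambda>k. agree x k \<subseteq> S"] k_def by simp
  then show "x \<in> (\<Union>n. level n)" using k n by (auto simp: level_def)
qed (use level_subset in blast)

lemma level_first_difference:
  assumes "x \<in> level n" "y \<in> S" "\<And>j. j < i \<Longrightarrow> x j = y j" "x i < y i"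
  shows "n \<le> i"
proof (rule ccontr)
  assume "\<not> n \<le> i"
  then have "agree x n \<subseteq> agree x (Suc i)" by (intro agree_antimono) simp
  also have "\<dots> \<subseteq> S" using agree_Suc_subset[OF assms(2)] assms(3,4) by metis
  finally show False using assms(1) by (simp add: level_def)
qed

lemma level_agree:
  assumes "x \<in> level n" "y \<in> level n" "i < n"
  shows "x i = y i"
  using lex_less_linear[of x y]
proof (elim disjE)
  assume "lex_less x y"
  then obtain k where "\<forall>j<k. x j = y j" "x k < y k" by (auto simp: lex_less_def)
  moreover have "n \<le> k"
    using calculation level_first_difference[OF assms(1)] assms(2) level_subset by blast
  ultimately show ?thesis using assms(3) by simp
next
  assume "lex_less y x"
  then obtain k where "\<forall>j<k. y j = x j" "y k < x k" by (auto simp: lex_less_def)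
  moreover have "n \<le> k"
    using calculation level_first_difference[OF assms(2)] assms(1) level_subset by blast
  ultimately show ?thesis using assms(3) by simp
qed simp

lemma level_less:
  assumes "m < n" "x \<in> level m" "y \<in> level n"
  shows "lex_less x y"
proof (rule ccontr)
  assume "\<not> lex_less x y"
  have "x j = y j" if "j < n" for j
    using lex_less_linear[of x y]
  proof (elim disjE)
    assume "lex_less y x"
    then obtain k where "\<forall>j<k. y j = x j" "y k < x k" by (auto simp: lex_less_def)
    moreover have "n \<le> k"
      using calculation level_first_difference[OF assms(3)] assms(2) level_subset by blast
    ultimately show ?thesis using that by simp
  qed (use \<open>\<not> lex_less x y\<close> in simp_all)
  then have "agree y n \<subseteq> agree x (Suc m)"
    using agree_antimono[of "Suc m" n y] agree_cong[of "Suc m" x y] assms(1) by simp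
  also have "\<dots> \<subseteq> S" using assms(2) by (simp add: level_def)
  finally show False using assms(3) by (simp add: level_def)
qed

lemma level_nonempty_mono:
  assumes "level n \<noteq> {}" "m < n"
  shows "level m \<noteq> {}"
proof -
  obtain x where x: "x \<in> level n" using assms(1) by blast
  define y where "y = x(m := x m - 1)"
  have "agree y (Suc m) \<subseteq> S"
    using x level_subset by (intro agree_Suc_subset[of x]) (auto simp: y_def)
  moreover have "\<not> agree y m \<subseteq> S"
  proof
    assume "agree y m \<subseteq> S"
    moreover have "agree x n \<subseteq> agree y m"
      using agree_antimono[of m n x] agree_cong[of m x y] assms(2) by (simp add: y_def)
    ultimately show False using x by (auto simp: level_def)
  qed
  ultimately show ?thesis by (auto simp: level_def)
qed

lemma bdd_above_level_entry:
  assumes "x0 \<in> level n"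
  shows "bdd_above ((\<lambda>x. x n) ` level n)"
proof (rule ccontr)
  assume unbounded: "\<not> bdd_above ((\<lambda>x. x n) ` level n)"
  have "agree x0 n \<subseteq> S"
  proof
    fix z assume z: "z \<in> agree x0 n"
    have "\<not> (\<forall>x\<in>level n. x n \<le> z n)"
      using unbounded bdd_aboveI2[of "level n" "\<lambda>x. x n" "z n"] by auto
    then obtain x where x: "x \<in> level n" "z n < x n" by (auto simp: not_le)
    have "lex_less z x"
      using z level_agree[OF x(1) assms] x(2) by (intro lex_lessI[of n]) (auto simp: agree_def)
    then show "z \<in> S" using down_closed x(1) level_subset by blast
  qed
  then show False using assms by (simp add: level_def)
qed

lemma level_eq:
  assumes "x0 \<in> level n"
  defines "M \<equiv> Sup ((\<lambda>x. x n) ` level n)"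
  shows "level n = {x. (\<forall>i<n. x i = x0 i) \<and> x n \<le> M}"
proof (intro equalityI subsetI)
  have bdd: "bdd_above ((\<lambda>x. x n) ` level n)" using bdd_above_level_entry[OF assms(1)] .
  {
    fix x assume x: "x \<in> level n"
    have "x n \<le> M" unfolding M_def using bdd x by (intro cSup_upper) auto
    then show "x \<in> {x. (\<forall>i<n. x i = x0 i) \<and> x n \<le> M}"
      using level_agree[OF x assms(1)] by simp
  }
  fix x assume x: "x \<in> {x. (\<forall>i<n. x i = x0 i) \<and> x n \<le> M}"
  have "(\<lambda>x. x n) ` level n \<noteq> {}" using assms(1) by blast
  then have "M \<in> (\<lambda>x. x n) ` level n"
    unfolding M_def using bdd by (rule int_Sup_mem)
  then obtain xM where xM: "xM \<in> level n" "xM n = M" by blast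
  have xM_agree: "xM i = x i" if "i < n" for i
    using level_agree[OF xM(1) assms(1) that] x that by simp
  have "agree x (Suc n) \<subseteq> S"
  proof
    fix z assume "z \<in> agree x (Suc n)"
    then have zx: "z i = x i" if "i < Suc n" for i
      using that by (simp add: agree_def)
    show "z \<in> S"
    proof (cases "z n = M")
      case True
      have "z i = xM i" if "i < Suc n" for i
        using that zx[OF that] xM_agree xM(2) True by (cases "i = n") auto
      then have "z \<in> agree xM (Suc n)" by (simp add: agree_def)
      then show ?thesis using xM(1) by (auto simp: level_def)
    next
      case False
      have "z n < xM n" using zx[of n] False x xM(2) by simp
      then have "lex_less z xM"
        using zx xM_agree by (intro lex_lessI[of n]) auto
      then show ?thesis using down_closed xM(1) level_subset by blast
    qed
  qed
  moreover have "agree x n = agree x0 n" using x by (intro agree_cong) simp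
  ultimately show "x \<in> level n" using assms(1) by (simp add: level_def)
qed

lemma tail_isomorphic_UNIV_level:
  assumes "level n \<noteq> {}"
  shows "tail_isomorphic UNIV (level n)"
proof -
  obtain x0 where x0: "x0 \<in> level n" using assms by blast
  define M where "M = Sup ((\<lambda>x. x n) ` level n)"
  have "level n = {x. (\<forall>i<n. x i = x0 i) \<and> x n \<le> M}"
    unfolding M_def by (rule level_eq[OF x0])
  also have "\<dots> = conc (map x0 [0..<n]) ` {v. v 0 \<le> M}"
    by (simp add: conc_image_head_le)
  finally show ?thesis
    using tail_isomorphic_trans[OF tail_isomorphic_UNIV_le[of M] tail_isomorphic_conc_image] by simp
qed

theorem tail_isomorphic_UNIV: "tail_isomorphic UNIV S"
proof (cases "\<forall>n. level n \<noteq> {}")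
  case True
  then have "tail_isomorphic UNIV (\<Union>n. level n)"
    using tail_isomorphic_UNIV_level level_less by (intro tail_isomorphic_UNIV_UN) blast+
  then show ?thesis by (simp only: UN_level)
next
  case False
  define N where "N = (LEAST N. level N = {})"
  have N: "level N = {}" unfolding N_def using False by (metis (mono_tags) LeastI_ex)
  then have empty: "level n = {}" if "N \<le> n" for n
    using level_nonempty_mono that le_neq_implies_less by metis
  have "(\<Union>n<N. level n) = S"
  proof (intro equalityI subsetI)
    fix x assume "x \<in> S"
    then obtain n where n: "x \<in> level n" using UN_level by blast
    then have "n < N" using empty by (metis empty_iff not_le)
    then show "x \<in> (\<Union>n<N. level n)" using n by blast
  qed (use level_subset in blast)
  moreover have "0 < N"
  proof -
    obtain n where "level n \<noteq> {}" using nonempty UN_level by blast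
    then have "level 0 \<noteq> {}" using level_nonempty_mono by (cases n) auto
    then show ?thesis using N by (cases N) auto
  qed
  moreover have "level n \<noteq> {}" if "n < N" for n
    using not_less_Least[of n "\<lambda>N. level N = {}"] that N_def by blast
  ultimately show ?thesis
    using tail_isomorphic_UNIV_level level_less tail_isomorphic_UNIV_UN_lessThan[of N level] by simp
qed

end


lemma tail_isomorphic_UNIV_downset:
  assumes "\<And>x y. x \<in> S \<Longrightarrow> lex_less y x \<Longrightarrow> y \<in> S"
    and "\<And>x. x \<in> S \<Longrightarrow> \<exists>y\<in>S. lex_less x y"
    and "S \<noteq> {}"
  shows "tail_isomorphic UNIV S"
proof (cases "S = UNIV")
  case False
  then interpret lex_downset S
    using assms by unfold_locales
  show ?thesis by (rule tail_isomorphic_UNIV)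
qed (simp add: tail_isomorphic_refl)

lemma tail_isomorphic_UNIV_upset:
  assumes "\<And>x y. x \<in> S \<Longrightarrow> lex_less x y \<Longrightarrow> y \<in> S"
    and "\<And>x. x \<in> S \<Longrightarrow> \<exists>y\<in>S. lex_less y x"
    and "S \<noteq> {}"
  shows "tail_isomorphic UNIV S"
proof -
  have "tail_isomorphic UNIV (uminus ` S)"
  proof (rule tail_isomorphic_UNIV_downset)
    show "y \<in> uminus ` S" if "x \<in> uminus ` S" "lex_less y x" for x y
      using that assms(1)[of "- x" "- y"] by simp
    show "\<exists>y\<in>uminus ` S. lex_less x y" if "x \<in> uminus ` S" for x
      using that assms(2)[of "- x"] by (metis lex_less_uminus_iff mem_uminus_image_iff uminus_uminus_zseq)
  qed (use assms(3) in blast)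
  from tail_isomorphic_uminus_image[OF this] show ?thesis by simp
qed

lemma tail_isomorphic_UNIV_lower_part:
  assumes "tail_isomorphic UNIV C" "T \<subseteq> C" "T \<noteq> {}"
    and down: "\<And>y z. y \<in> T \<Longrightarrow> z \<in> C \<Longrightarrow> lex_less z y \<Longrightarrow> z \<in> T"
    and no_max: "\<And>y. y \<in> T \<Longrightarrow> \<exists>z\<in>T. lex_less y z"
  shows "tail_isomorphic UNIV T"
proof -
  obtain g where g: "tail_iso_on g UNIV C"
    using assms(1) by (auto simp: tail_isomorphic_def)
  have gC: "range g = C" using tail_iso_on_bij[OF g] by (simp add: bij_betw_def)
  define U where "U = {u. g u \<in> T}"
  have gU: "g ` U = T" using gC assms(2) by (auto simp: U_def)
  have "tail_isomorphic UNIV U"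
  proof (rule tail_isomorphic_UNIV_downset)
    show "y \<in> U" if "x \<in> U" "lex_less y x" for x y
      using that down gC tail_iso_on_lex_less_iff[OF g] by (auto simp: U_def)
    show "\<exists>y\<in>U. lex_less x y" if x: "x \<in> U" for x
    proof -
      obtain z where "z \<in> T" "lex_less (g x) z" using no_max x by (auto simp: U_def)
      moreover obtain v where "z = g v" using \<open>z \<in> T\<close> gC assms(2) by blast
      ultimately show ?thesis using tail_iso_on_lex_less_iff[OF g] by (auto simp: U_def)
    qed
  qed (use gU assms(3) in blast)
  moreover have "tail_isomorphic U T"
    using tail_iso_on_subset[OF g, of U] gU by (auto simp: tail_isomorphic_def)
  ultimately show ?thesis by (rule tail_isomorphic_trans)
qed

lemma tail_isomorphic_UNIV_upper_part:
  assumes "tail_isomorphic UNIV C" "T \<subseteq> C" "T \<noteq> {}"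
    and up: "\<And>y z. y \<in> T \<Longrightarrow> z \<in> C \<Longrightarrow> lex_less y z \<Longrightarrow> z \<in> T"
    and no_min: "\<And>y. y \<in> T \<Longrightarrow> \<exists>z\<in>T. lex_less z y"
  shows "tail_isomorphic UNIV T"
proof -
  have "tail_isomorphic UNIV (uminus ` T)"
  proof (rule tail_isomorphic_UNIV_lower_part)
    show "tail_isomorphic UNIV (uminus ` C)"
      using tail_isomorphic_uminus_image[OF assms(1)] by simp
    show "z \<in> uminus ` T" if "y \<in> uminus ` T" "z \<in> uminus ` C" "lex_less z y" for y z
      using that up[of "- y" "- z"] by simp
    show "\<exists>z\<in>uminus ` T. lex_less y z" if "y \<in> uminus ` T" for y
      using that no_min[of "- y"] by (metis lex_less_uminus_iff mem_uminus_image_iff uminus_uminus_zseq)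
  qed (use assms(2,3) in auto)
  from tail_isomorphic_uminus_image[OF this] show ?thesis by simp
qed

section \<open>Open intervals\<close>

lemma lex_gap_between:
  assumes "lex_less a b"
  obtains C where "a \<in> C" "b \<notin> C"
    and "\<And>x y. x \<in> C \<Longrightarrow> lex_less y x \<Longrightarrow> y \<in> C"
    and "\<And>x. x \<in> C \<Longrightarrow> \<exists>y\<in>C. lex_less x y"
    and "\<And>x. x \<notin> C \<Longrightarrow> \<exists>y. y \<notin> C \<and> lex_less y x"
proof -
  obtain i where i: "\<forall>j<i. a j = b j" "a i < b i" using assms by (auto simp: lex_less_def)
  define c where "c = a(i := a i + 1)"
  \<comment> \<open>the sequences lying below every sequence that begins with c 0, ..., c i\<close>
  define C where "C = {x. \<exists>j\<le>i. (\<forall>l<j. x l = c l) \<and> x j < c j}"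
  show ?thesis
  proof (rule that[of C])
    show "a \<in> C" unfolding C_def c_def by (intro CollectI exI[of _ i]) auto
    show "b \<notin> C"
    proof
      assume "b \<in> C"
      then obtain j where "j \<le> i" "\<forall>l<j. b l = c l" "b j < c j" unfolding C_def by blast
      then show False using i unfolding c_def by (cases "j = i") auto
    qed
    show "y \<in> C" if "x \<in> C" "lex_less y x" for x y
    proof -
      obtain j where j: "j \<le> i" "\<forall>l<j. x l = c l" "x j < c j" using \<open>x \<in> C\<close> unfolding C_def by blast
      obtain k where k: "\<forall>l<k. y l = x l" "y k < x k" using \<open>lex_less y x\<close> by (auto simp: lex_less_def)
      have "(\<forall>l<min k j. y l = c l) \<and> y (min k j) < c (min k j)"
        using j k by (cases k j rule: linorder_cases) auto
      then show "y \<in> C" unfolding C_def using j(1) by (intro CollectI exI[of _ "min k j"]) auto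
    qed
    show "\<exists>y\<in>C. lex_less x y" if "x \<in> C" for x
    proof -
      obtain j where j: "j \<le> i" "\<forall>l<j. x l = c l" "x j < c j" using \<open>x \<in> C\<close> unfolding C_def by blast
      define y where "y = x(Suc j := x (Suc j) + 1)"
      have "lex_less x y" unfolding y_def by (rule lex_lessI[of "Suc j"]) auto
      moreover have "y \<in> C" unfolding C_def y_def using j by (intro CollectI exI[of _ j]) auto
      ultimately show ?thesis by blast
    qed
    show "\<exists>y. y \<notin> C \<and> lex_less y x" if "x \<notin> C" for x
    proof -
      define y where "y = x(Suc i := x (Suc i) - 1)"
      have "lex_less y x" unfolding y_def by (rule lex_lessI[of "Suc i"]) auto
      moreover have "y \<in> C \<longleftrightarrow> x \<in> C"
      proof -
        have "((\<forall>l<j. y l = c l) \<and> y j < c j) \<longleftrightarrow> ((\<forall>l<j. x l = c l) \<and> x j < c j)"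
          if "j \<le> i" for j
          using that by (auto simp: y_def)
        then show ?thesis unfolding C_def by blast
      qed
      ultimately show ?thesis using that by blast
    qed
  qed
qed

lemma tail_isomorphic_UNIV_open_interval:
  assumes "open_interval I"
  shows "tail_isomorphic UNIV I"
proof -
  have convex: "\<And>a b x. a \<in> I \<Longrightarrow> b \<in> I \<Longrightarrow> lex_less a x \<Longrightarrow> lex_less x b \<Longrightarrow> x \<in> I"
    and no_max: "\<And>a. a \<in> I \<Longrightarrow> \<exists>b\<in>I. lex_less a b"
    and no_min: "\<And>a. a \<in> I \<Longrightarrow> \<exists>b\<in>I. lex_less b a"
    using assms unfolding open_interval_def lex_le_def by blast+
  obtain a where a: "a \<in> I" using assms by (auto simp: open_interval_def)
  obtain b where b: "b \<in> I" "lex_less a b" using no_max a by blast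
  obtain C where C: "a \<in> C" "b \<notin> C"
    and down: "\<And>x y. x \<in> C \<Longrightarrow> lex_less y x \<Longrightarrow> y \<in> C"
    and C_no_max: "\<And>x. x \<in> C \<Longrightarrow> \<exists>y\<in>C. lex_less x y"
    and C_no_min: "\<And>x. x \<notin> C \<Longrightarrow> \<exists>y. y \<notin> C \<and> lex_less y x"
    using lex_gap_between[OF b(2)] by blast
  have below: "lex_less x y" if "x \<in> C" "y \<notin> C" for x y
    using lex_less_linear[of x y] down that by blast
  have "tail_isomorphic UNIV (I \<inter> C)"
  proof (rule tail_isomorphic_UNIV_upper_part)
    show "tail_isomorphic UNIV C"
      using down C_no_max C(1) by (intro tail_isomorphic_UNIV_downset) auto
    show "z \<in> I \<inter> C" if "y \<in> I \<inter> C" "z \<in> C" "lex_less y z" for y z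
      using that convex[of y b z] b(1) below[of z b] C(2) by blast
    show "\<exists>z\<in>I \<inter> C. lex_less z y" if "y \<in> I \<inter> C" for y
      using that no_min down by blast
  qed (use a C(1) in auto)
  moreover have "tail_isomorphic UNIV (I - C)"
  proof (rule tail_isomorphic_UNIV_lower_part)
    show "tail_isomorphic UNIV (- C)"
      using down C_no_min C(2) by (intro tail_isomorphic_UNIV_upset) (simp_all, blast+)
    show "z \<in> I - C" if "y \<in> I - C" "z \<in> - C" "lex_less z y" for y z
      using that convex[of a y z] a below[of a z] C(1) by blast
    show "\<exists>z\<in>I - C. lex_less y z" if "y \<in> I - C" for y
      using that no_max down by blast
  qed (use b C(2) in auto)
  moreover have "I = (I \<inter> C) \<union> (I - C)" by blast
  ultimately show ?thesis
    using below tail_isomorphic_UNIV_Un[of "I \<inter> C" "I - C"] by auto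
qed

lemma lex_iso_Int_if_tail_isomorphic:
  assumes X: "closed_tail_equiv X" and "tail_isomorphic UNIV I"
  shows "lex_iso X (X \<inter> I)"
proof -
  obtain f where f: "tail_iso_on f UNIV I" using assms(2) by (auto simp: tail_isomorphic_def)
  have bij: "bij_betw f UNIV I" by (rule tail_iso_on_bij[OF f])
  have "f ` X = X \<inter> I"
  proof (intro equalityI subsetI)
    fix y assume "y \<in> f ` X"
    then show "y \<in> X \<inter> I"
      using X tail_iso_on_tail_equiv[OF f] bij_betw_apply[OF bij] unfolding closed_tail_equiv_def by blast
  next
    fix y assume y: "y \<in> X \<inter> I"
    then obtain u where u: "y = f u" using bij unfolding bij_betw_def by auto
    then have "tail_equiv y u" using tail_iso_on_tail_equiv[OF f, of u] tail_equiv_sym by simp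
    then have "u \<in> X" using X y unfolding closed_tail_equiv_def by blast
    then show "y \<in> f ` X" using u by blast
  qed
  then have "bij_betw f X (X \<inter> I)"
    using bij by (metis bij_betw_def bij_betw_subset subset_UNIV)
  then show ?thesis
    unfolding lex_iso_def using tail_iso_on_lex_less_iff[OF f] by blast
qed

theorem mainTheorem8:
  fixes X :: "zseq set"
  assumes "closed_tail_equiv X"
  shows "(\<forall>I. open_interval I \<longrightarrow> lex_iso X (X \<inter> I))
       \<and> (\<forall>r. r \<noteq> [] \<longrightarrow> lex_iso X (X \<inter> cyl r))"
  using lex_iso_Int_if_tail_isomorphic[OF assms] tail_isomorphic_UNIV_open_interval tail_isomorphic_cyl
  by blast

end
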